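(* The metric space $(\mathcal M_{\mathcal G,\Gamma},\mathrm m_{\mathcal G,\Gamma})$ is separable.
   Context: $(X,\Sigma,\mu)$ is a separable Lebesgue space with a non-atomic probability measure $\mu$. $\mathcal A$ is the group of invertible measure-preserving transformations of $X$, two transformations being identified if they agree outside a null set. Fix a countable family $\{A_i\}_{i\in\mathbb N}\subset\Sigma$ that generates $\Sigma$ and is dense in $\Sigma$ (for every $A\in\Sigma$ and $\varepsilon>0$ there is $i$ with $\mu(A_i\triangle A)<\varepsilon$). For $T,S\in\mathcal A$ put $\mathrm d(T,S)=\sum_{i}2^{-i}\big(\mu(TA_i\triangle SA_i)+\mu(T^{-1}A_i\triangle S^{-1}A_i)\big)$ and $\mathrm a(T,S)=\sum_{i,j}2^{-(i+j)}|\mu(TA_i\cap A_j)-\mu(SA_i\cap A_j)|$. $\mathcal G$ is a Hausdorff locally compact group with a countable neighborhood base, with identity $e$. Fix an at most countable family $\{K_i\}$ of compact subsets of $\mathcal G$ with nonempty interiors whose union contains a set generating $\mathcal G$. An action of $\mathcal G$ is a family $T=\{T^g\}_{g\in\mathcal G}\subset\mathcal A$ with $T^gT^h=T^{gh}$ for all $g,h\in\mathcal G$ and such that $g\mapsto\mu(T^gA\cap B)$ is continuous on $\mathcal G$ for all $A,B\in\Sigma$. $\mathcal A_{\mathcal G}$ is the set of all actions, and $\mathrm d_{\mathcal G}(T,S)=\sum_i 2^{-i}\sup_{g\in K_i}\mathrm d(T^g,S^g)$. Let $\Gamma\subset\mathcal G$ be an unbounded subset (not contained in any compact set). An action $T$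 is $\Gamma$-mixing if for all $A,B\in\Sigma$ and $\varepsilon>0$ there is a compact $C\subset\mathcal G$ with $|\mu(T^gA\cap B)-\mu(A)\mu(B)|<\varepsilon$ for all $g\in\Gamma\setminus C$. $\mathcal M_{\mathcal G,\Gamma}$ is the set of all $\Gamma$-mixing actions of $\mathcal G$, equipped with the (leash) metric $\mathrm m_{\mathcal G,\Gamma}(T,S)=\mathrm d_{\mathcal G}(T,S)+\sup_{g\in\Gamma}\mathrm a(T^g,S^g)$. *)

theory Defs
  imports "HOL-Probability.Probability"
begin

definition symdiff :: "'a set \<Rightarrow> 'a set \<Rightarrow> 'a set" where
  "symdiff A B = (A - B) \<union> (B - A)"

definition unit_interval_measure :: "real measure" where
  "unit_interval_measure = restrict_space lborel {0..1}"

definition nonatomic :: "'a measure \<Rightarrow> bool" where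
  "nonatomic M \<longleftrightarrow> (\<forall>A\<in>sets M. measure M A > 0 \<longrightarrow>
      (\<exists>B\<in>sets M. B \<subseteq> A \<and> 0 < measure M B \<and> measure M B < measure M A))"

text \<open>Non-atomic (separable) Lebesgue probability space: isomorphic mod 0 to the unit
  interval with Lebesgue measure (Rokhlin).\<close>
definition lebesgue_space :: "'a measure \<Rightarrow> bool" where
  "lebesgue_space M \<longleftrightarrow> prob_space M \<and>
    (\<exists>N N' \<phi> \<psi>. N \<in> null_sets M \<and> N' \<in> null_sets unit_interval_measure \<and>
       \<phi> \<in> measurable M unit_interval_measure \<and> \<psi> \<in> measurable unit_interval_measure M \<and>
       distr M unit_interval_measure \<phi> = unit_interval_measure \<and>
       (\<forall>x\<in>space M - N. \<phi> x \<in> {0..1} - N' \<and> \<psi> (\<phi> x) = x) \<and>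
       (\<forall>y\<in>{0..1} - N'. \<psi> y \<in> space M - N \<and> \<phi> (\<psi> y) = y))"

text \<open>An element of the group of invertible measure-preserving transformations is represented
  by a pair (T, T') of a transformation T and its (a.e.) inverse T'.\<close>
type_synonym 'a mpt = "('a \<Rightarrow> 'a) \<times> ('a \<Rightarrow> 'a)"

definition is_mpt :: "'a measure \<Rightarrow> 'a mpt \<Rightarrow> bool" where
  "is_mpt M P \<longleftrightarrow> fst P \<in> measurable M M \<and> snd P \<in> measurable M M \<and>
     distr M M (fst P) = M \<and> distr M M (snd P) = M \<and>
     (AE x in M. snd P (fst P x) = x) \<and> (AE x in M. fst P (snd P x) = x)"

definition mpt_eq :: "'a measure \<Rightarrow> 'a mpt \<Rightarrow> 'a mpt \<Rightarrow> bool" where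
  "mpt_eq M P Q \<longleftrightarrow> (AE x in M. fst P x = fst Q x)"

definition mpt_comp :: "'a mpt \<Rightarrow> 'a mpt \<Rightarrow> 'a mpt" where
  "mpt_comp P Q = (fst P \<circ> fst Q, snd Q \<circ> snd P)"

text \<open>Image T A (= preimage under the inverse) and preimage T^{-1} A.\<close>
definition mpt_img :: "'a measure \<Rightarrow> 'a mpt \<Rightarrow> 'a set \<Rightarrow> 'a set" where
  "mpt_img M P A = snd P -` A \<inter> space M"

definition mpt_preimg :: "'a measure \<Rightarrow> 'a mpt \<Rightarrow> 'a set \<Rightarrow> 'a set" where
  "mpt_preimg M P A = fst P -` A \<inter> space M"

definition dist_d :: "'a measure \<Rightarrow> (nat \<Rightarrow> 'a set) \<Rightarrow> 'a mpt \<Rightarrow> 'a mpt \<Rightarrow> real" where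
  "dist_d M A P Q = (\<Sum>i. (1/2)^i *
     (measure M (symdiff (mpt_img M P (A i)) (mpt_img M Q (A i))) +
      measure M (symdiff (mpt_preimg M P (A i)) (mpt_preimg M Q (A i)))))"

definition dist_a :: "'a measure \<Rightarrow> (nat \<Rightarrow> 'a set) \<Rightarrow> 'a mpt \<Rightarrow> 'a mpt \<Rightarrow> real" where
  "dist_a M A P Q = (\<Sum>i. \<Sum>j. (1/2)^(i+j) *
     \<bar>measure M (mpt_img M P (A i) \<inter> A j) - measure M (mpt_img M Q (A i) \<inter> A j)\<bar>)"

text \<open>The group G is written additively (not necessarily commutative).\<close>
definition generates_group :: "'g::group_add set \<Rightarrow> bool" where
  "generates_group S \<longleftrightarrow> (\<forall>H. 0 \<in> H \<and> (\<forall>x\<in>H. \<forall>y\<in>H. x + y \<in> H) \<and> (\<forall>x\<in>H. - x \<in> H)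
      \<and> S \<subseteq> H \<longrightarrow> H = UNIV)"

definition is_action :: "'a measure \<Rightarrow> ('g::topological_group_add \<Rightarrow> 'a mpt) \<Rightarrow> bool" where
  "is_action M T \<longleftrightarrow> (\<forall>g. is_mpt M (T g)) \<and>
     (\<forall>g h. mpt_eq M (mpt_comp (T g) (T h)) (T (g + h))) \<and>
     (\<forall>A\<in>sets M. \<forall>B\<in>sets M. continuous_on UNIV (\<lambda>g. measure M (mpt_img M (T g) A \<inter> B)))"

definition is_mixing :: "'a measure \<Rightarrow> 'g::topological_group_add set \<Rightarrow> ('g \<Rightarrow> 'a mpt) \<Rightarrow> bool" where
  "is_mixing M \<Gamma> T \<longleftrightarrow> (\<forall>A\<in>sets M. \<forall>B\<in>sets M. \<forall>\<epsilon>>0. \<exists>C. compact C \<and>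
     (\<forall>g\<in>\<Gamma> - C. \<bar>measure M (mpt_img M (T g) A \<inter> B) - measure M A * measure M B\<bar> < \<epsilon>))"

definition mixing_actions :: "'a measure \<Rightarrow> 'g::topological_group_add set \<Rightarrow> ('g \<Rightarrow> 'a mpt) set" where
  "mixing_actions M \<Gamma> = {T. is_action M T \<and> is_mixing M \<Gamma> T}"

text \<open>d_G, with the compact family K indexed by an at most countable index set I.\<close>
definition dist_dG :: "'a measure \<Rightarrow> (nat \<Rightarrow> 'a set) \<Rightarrow> (nat \<Rightarrow> 'g set) \<Rightarrow> nat set
    \<Rightarrow> ('g \<Rightarrow> 'a mpt) \<Rightarrow> ('g \<Rightarrow> 'a mpt) \<Rightarrow> real" where
  "dist_dG M A K I T S = (\<Sum>i. if i \<in> I then (1/2)^i * (SUP g\<in>K i. dist_d M A (T g) (S g)) else 0)"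

definition dist_m :: "'a measure \<Rightarrow> (nat \<Rightarrow> 'a set) \<Rightarrow> (nat \<Rightarrow> 'g set) \<Rightarrow> nat set \<Rightarrow> 'g set
    \<Rightarrow> ('g \<Rightarrow> 'a mpt) \<Rightarrow> ('g \<Rightarrow> 'a mpt) \<Rightarrow> real" where
  "dist_m M A K I \<Gamma> T S = dist_dG M A K I T S + (SUP g\<in>\<Gamma>. dist_a M A (T g) (S g))"

end

theory Submission
  imports Defs
begin

text \<open>The group is generated by countably many compacta, hence \<sigma>-compact, and being first
  countable it is second countable; fix a countable basis. Given \<open>N\<close> and a finite set \<open>F\<close> of
  tuples \<open>(B, n, j, j')\<close> with \<open>B\<close> a basic open set, consider the cell of mixing actions \<open>T\<close>
  such that \<open>A j\<close> and \<open>A j'\<close> approximate \<open>T\<^sup>h (A n)\<close> and \<open>T\<^sup>-\<^sup>h (A n)\<close> within \<open>2\<^sup>-\<^sup>N\<close> for all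
  \<open>h \<in> B\<close>, the sets \<open>B\<close> cover every \<open>K i\<close> with \<open>i \<le> N\<close>, and off this cover
  \<open>\<mu> (T\<^sup>g (A n) \<inter> A m)\<close> is within \<open>2\<^sup>-\<^sup>N\<close> of \<open>\<mu> (A n) \<mu> (A m)\<close> for \<open>n, m \<le> N\<close>. Two actions in one
  cell are \<open>O(2\<^sup>-\<^sup>N)\<close>-close in the leash metric: on the cover both are close to the same recorded
  sets, off it both are close to independence. By continuity of the action, compactness and
  mixing, every mixing action lies in some cell. There are only countably many cells, so one
  action from each nonempty cell gives a countable dense set.\<close>

section \<open>Compactly generated groups are second countable\<close>

lemma open_translation_group:
  fixes a :: "'g::topological_group_add"
  assumes "open U"
  shows "open ((+) a ` U)"
proof -
  have "(+) a ` U = (\<lambda>x. - a + x) -` U"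
    by (force simp: add.assoc[symmetric])
  moreover have "open ((\<lambda>x. - a + x) -` U)"
    by (intro open_vimage assms continuous_intros)
  ultimately show ?thesis
    by simp
qed

lemma small_translates_subset:
  fixes U :: "nat \<Rightarrow> 'g::topological_group_add set"
  assumes U: "\<And>S. open S \<Longrightarrow> 0 \<in> S \<Longrightarrow> \<exists>n. U n \<subseteq> S" and "open V" "g \<in> V"
  shows "\<exists>n. \<forall>x. g \<in> (+) x ` U n \<longrightarrow> (+) x ` U n \<subseteq> V"
proof -
  \<comment> \<open>\<open>\<phi> (u, v) = x + v\<close> whenever \<open>g = x + u\<close>\<close>
  define \<phi> where "\<phi> = (\<lambda>p::'g \<times> 'g. g + (- fst p + snd p))"
  have "open (\<phi> -` V)"
    unfolding \<phi>_def by (intro open_vimage assms continuous_intros)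
  moreover have "(0, 0) \<in> \<phi> -` V"
    using assms by (simp add: \<phi>_def)
  ultimately obtain S1 S2 where S: "open S1" "open S2" "(0, 0) \<in> S1 \<times> S2" "S1 \<times> S2 \<subseteq> \<phi> -` V"
    by (rule open_prod_elim)
  then obtain n where n: "U n \<subseteq> S1 \<inter> S2"
    using U[of "S1 \<inter> S2"] by auto
  have "(+) x ` U n \<subseteq> V" if gx: "g \<in> (+) x ` U n" for x
  proof
    fix y assume "y \<in> (+) x ` U n"
    then obtain u v where "u \<in> U n" "v \<in> U n" "g = x + u" "y = x + v"
      using gx by auto
    moreover from this have "\<phi> (u, v) \<in> V"
      using n S(4) by auto
    ultimately show "y \<in> V"
      by (simp add: \<phi>_def add.assoc)
  qed
  then show ?thesis by blast
qed

lemma countable_basis_if_sigma_compact: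
  fixes W :: "nat \<Rightarrow> 'g::{topological_group_add, first_countable_topology} set"
  assumes W: "\<And>k. compact (W k)" "(\<Union>k. W k) = UNIV"
  shows "\<exists>\<B> :: 'g set set. countable \<B> \<and> topological_basis \<B>"
proof -
  obtain U :: "nat \<Rightarrow> 'g set" where U: "\<And>n. 0 \<in> U n \<and> open (U n)"
    and U_small: "\<And>S. open S \<Longrightarrow> 0 \<in> S \<Longrightarrow> \<exists>n. U n \<subseteq> S"
    using first_countable_basis[of "0::'g"] by metis
  have "\<exists>F. finite F \<and> W k \<subseteq> (\<Union>x\<in>F. (+) x ` U n)" for k n
  proof -
    have "y \<in> (+) y ` U n" for y
    proof -
      have "y = y + 0" by simp
      then show ?thesis using U by blast
    qed
    then have cover: "W k \<subseteq> (\<Union>x\<in>W k. (+) x ` U n)"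
      by blast
    have "open ((+) x ` U n)" for x
      using U by (simp add: open_translation_group)
    then obtain F where "F \<subseteq> W k" "finite F" "W k \<subseteq> (\<Union>x\<in>F. (+) x ` U n)"
      using cover by (rule compactE_image[OF W(1)])
    then show ?thesis
      by blast
  qed
  then obtain F where F: "\<And>k n. finite (F k n) \<and> W k \<subseteq> (\<Union>x\<in>F k n. (+) x ` U n)"
    by metis
  define \<B> where "\<B> = (\<lambda>(k, n, x). (+) x ` U n) ` (SIGMA k:UNIV. SIGMA n:UNIV. F k n)"
  have "countable \<B>"
    unfolding \<B>_def using F by (intro countable_image countable_SIGMA) (auto intro: countable_finite)
  moreover have "topological_basis \<B>"
  proof (rule topological_basis_iff[THEN iffD2])
    show "open B" if "B \<in> \<B>" for B
    proof -
      from that obtain n x where "B = (+) x ` U n"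
        unfolding \<B>_def by auto
      then show ?thesis
        using U by (simp add: open_translation_group)
    qed
    show "\<forall>V. open V \<longrightarrow> (\<forall>g\<in>V. \<exists>B\<in>\<B>. g \<in> B \<and> B \<subseteq> V)"
    proof (intro allI impI ballI)
      fix V :: "'g set" and g assume "open V" "g \<in> V"
      then obtain n where n: "\<And>x. g \<in> (+) x ` U n \<Longrightarrow> (+) x ` U n \<subseteq> V"
        using small_translates_subset[OF U_small] by meson
      obtain k where "g \<in> W k"
        using W(2) by auto
      then obtain x where x: "x \<in> F k n" "g \<in> (+) x ` U n"
        using F by blast
      have "(+) x ` U n \<in> \<B>"
        unfolding \<B>_def by (rule image_eqI[where x = "(k, n, x)"]) (use x in auto)
      then show "\<exists>B\<in>\<B>. g \<in> B \<and> B \<subseteq> V"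
        using n x(2) by blast
    qed
  qed
  ultimately show ?thesis
    by blast
qed

primrec iter_sumset :: "(nat \<Rightarrow> 'g::monoid_add set) \<Rightarrow> nat \<Rightarrow> 'g set" where
  "iter_sumset L 0 = {0}"
| "iter_sumset L (Suc k) = (\<lambda>p. fst p + snd p) ` (iter_sumset L k \<times> L k)"

lemma compact_iter_sumset:
  fixes L :: "nat \<Rightarrow> 'g::topological_monoid_add set"
  assumes "\<And>k. compact (L k)"
  shows "compact (iter_sumset L k)"
  by (induction k) (auto intro!: compact_continuous_image compact_Times assms continuous_intros)

lemma iter_sumset_SucI: "a \<in> iter_sumset L k \<Longrightarrow> l \<in> L k \<Longrightarrow> a + l \<in> iter_sumset L (Suc k)"
  by (auto intro!: image_eqI[where x = "(a, l)"])

lemma zero_in_iter_sumset: "(\<And>k. 0 \<in> L k) \<Longrightarrow> 0 \<in> iter_sumset L k"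
  by (induction k) (use iter_sumset_SucI[of 0 L] in fastforce)+

lemma subset_iter_sumset_Suc:
  assumes "\<And>k. 0 \<in> L k"
  shows "L k \<subseteq> iter_sumset L (Suc k)"
proof
  fix l assume "l \<in> L k"
  then have "0 + l \<in> iter_sumset L (Suc k)"
    by (intro iter_sumset_SucI zero_in_iter_sumset assms)
  then show "l \<in> iter_sumset L (Suc k)"
    by (simp only: add_0_left)
qed

lemma iter_sumset_add:
  assumes "mono L" "a \<in> iter_sumset L k" "b \<in> iter_sumset L m"
  shows "a + b \<in> iter_sumset L (k + m)"
  using assms(3)
proof (induction m arbitrary: b)
  case (Suc m)
  then obtain b' l where "b' \<in> iter_sumset L m" "l \<in> L m" "b = b' + l"
    by auto
  moreover from this have "a + b' + l \<in> iter_sumset L (Suc (k + m))"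
    using Suc.IH monoD[OF assms(1), of m "k + m"] by (intro iter_sumset_SucI) auto
  ultimately show ?case
    by (simp add: add.assoc)
qed (use assms(2) in simp)

lemma uminus_in_iter_sumsets:
  fixes L :: "nat \<Rightarrow> 'g::group_add set"
  assumes "mono L" "\<And>k. 0 \<in> L k" "\<And>k l. l \<in> L k \<Longrightarrow> - l \<in> L k"
    and "b \<in> iter_sumset L m"
  shows "\<exists>k. - b \<in> iter_sumset L k"
  using assms(4)
proof (induction m arbitrary: b)
  case 0
  then show ?case
    by (intro exI[of _ 0]) simp
next
  case (Suc m)
  then obtain b' l where "b' \<in> iter_sumset L m" "l \<in> L m" "b = b' + l"
    by auto
  moreover from this obtain k where "- b' \<in> iter_sumset L k"
    using Suc.IH by blast
  moreover have "- l \<in> iter_sumset L (Suc m)"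
    using subset_iter_sumset_Suc assms(2,3) \<open>l \<in> L m\<close> by blast
  ultimately have "- l + - b' \<in> iter_sumset L (Suc m + k)"
    using iter_sumset_add[OF assms(1)] by blast
  then show ?case
    using \<open>b = b' + l\<close> by (metis minus_add)
qed

lemma UN_iter_sumset_eq_UNIV:
  fixes L :: "nat \<Rightarrow> 'g::group_add set"
  assumes "mono L" "\<And>k. 0 \<in> L k" "\<And>k l. l \<in> L k \<Longrightarrow> - l \<in> L k"
    and "S \<subseteq> (\<Union>k. L k)" "generates_group S"
  shows "(\<Union>k. iter_sumset L k) = UNIV"
proof (rule assms(5)[unfolded generates_group_def, rule_format], intro conjI ballI subsetI)
  show "0 \<in> (\<Union>k. iter_sumset L k)"
    using zero_in_iter_sumset[of L, OF assms(2)] by blast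
next
  fix x y assume "x \<in> (\<Union>k. iter_sumset L k)" "y \<in> (\<Union>k. iter_sumset L k)"
  then obtain k m where "x \<in> iter_sumset L k" "y \<in> iter_sumset L m"
    by blast
  then have "x + y \<in> iter_sumset L (k + m)"
    by (rule iter_sumset_add[OF assms(1)])
  then show "x + y \<in> (\<Union>k. iter_sumset L k)"
    by blast
next
  fix x assume "x \<in> (\<Union>k. iter_sumset L k)"
  then obtain m where "x \<in> iter_sumset L m"
    by blast
  then show "- x \<in> (\<Union>k. iter_sumset L k)"
    using uminus_in_iter_sumsets[OF assms(1-3)] by blast
next
  fix s assume "s \<in> S"
  then obtain k where "s \<in> L k"
    using assms(4) by blast
  then have "s \<in> iter_sumset L (Suc k)"
    using subset_iter_sumset_Suc[of L, OF assms(2)] by blast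
  then show "s \<in> (\<Union>k. iter_sumset L k)"
    by blast
qed

lemma sigma_compact_if_generated_by_compacts:
  fixes K :: "nat \<Rightarrow> 'g::topological_group_add set"
  assumes "\<forall>i\<in>I. compact (K i)" and "\<exists>S. S \<subseteq> (\<Union>i\<in>I. K i) \<and> generates_group S"
  shows "\<exists>W :: nat \<Rightarrow> 'g set. (\<forall>k. compact (W k)) \<and> (\<Union>k. W k) = UNIV"
proof -
  obtain S where S: "S \<subseteq> (\<Union>i\<in>I. K i)" "generates_group S"
    using assms(2) by blast
  define L where "L k = insert 0 (\<Union>i\<in>I \<inter> {..k}. K i \<union> uminus ` K i)" for k
  have "compact (L k)" for k
    unfolding L_def using assms(1)
    by (intro compact_insert compact_UN compact_Un compact_continuous_image continuous_intros) auto
  moreover have "(\<Union>k. iter_sumset L k) = UNIV"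
  proof (rule UN_iter_sumset_eq_UNIV[OF _ _ _ _ S(2)])
    show "mono L"
      unfolding L_def mono_def by auto
    show "S \<subseteq> (\<Union>k. L k)"
      using S(1) unfolding L_def by fastforce
  qed (auto simp: L_def)
  ultimately show ?thesis
    using compact_iter_sumset by blast
qed

section \<open>Measure-preserving transformations and actions\<close>

lemma symdiff_commute: "symdiff X Y = symdiff Y X"
  unfolding symdiff_def by auto

lemma AE_comp_measure_preserving:
  assumes "f \<in> measurable M M" "distr M M f = M" "AE x in M. P x"
  shows "AE x in M. P (f x)"
proof -
  have "AE x in distr M M f. P x"
    unfolding assms(2) by (rule assms(3))
  then show ?thesis
    by (rule AE_distrD[OF assms(1)])
qed

lemma measure_vimage_measure_preserving:
  assumes "f \<in> measurable M M" "distr M M f = M" "B \<in> sets M"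
  shows "measure M (f -` B \<inter> space M) = measure M B"
  using measure_distr[OF assms(1,3)] unfolding assms(2) by simp

lemma mpt_img_sets: "is_mpt M P \<Longrightarrow> B \<in> sets M \<Longrightarrow> mpt_img M P B \<in> sets M"
  unfolding is_mpt_def mpt_img_def by (auto intro: measurable_sets)

lemma mpt_preimg_sets: "is_mpt M P \<Longrightarrow> B \<in> sets M \<Longrightarrow> mpt_preimg M P B \<in> sets M"
  unfolding is_mpt_def mpt_preimg_def by (auto intro: measurable_sets)

lemma measure_mpt_img: "is_mpt M P \<Longrightarrow> B \<in> sets M \<Longrightarrow> measure M (mpt_img M P B) = measure M B"
  unfolding is_mpt_def mpt_img_def by (auto intro: measure_vimage_measure_preserving)

lemma measure_mpt_preimg: "is_mpt M P \<Longrightarrow> B \<in> sets M \<Longrightarrow> measure M (mpt_preimg M P B) = measure M B"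
  unfolding is_mpt_def mpt_preimg_def by (auto intro: measure_vimage_measure_preserving)

lemma action_fst_AE_eq_snd_uminus:
  assumes "is_action M T"
  shows "AE x in M. fst (T h) x = snd (T (- h)) x"
proof -
  have "is_mpt M (T g)" for g
    using assms unfolding is_action_def by blast
  then have fst_pres: "fst (T g) \<in> measurable M M" "distr M M (fst (T g)) = M"
    and snd_pres: "snd (T g) \<in> measurable M M" "distr M M (snd (T g)) = M"
    and snd_fst: "AE x in M. snd (T g) (fst (T g) x) = x"
    and fst_snd: "AE x in M. fst (T g) (snd (T g) x) = x" for g
    unfolding is_mpt_def by blast+
  have comp: "AE x in M. fst (T g) (fst (T k) x) = fst (T (g + k)) x" for g k
    using assms unfolding is_action_def mpt_eq_def mpt_comp_def by auto
  have "AE x in M. snd (T 0) (fst (T 0) (fst (T 0) x)) = fst (T 0) x"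
    by (rule AE_comp_measure_preserving[OF fst_pres snd_fst])
  then have "AE x in M. fst (T 0) x = x"
    using comp[of 0 0] snd_fst[of 0] by eventually_elim simp
  then have "AE x in M. fst (T h) (fst (T (- h)) x) = x"
    using comp[of h "- h"] by eventually_elim simp
  then have "AE x in M. fst (T h) (fst (T (- h)) (snd (T (- h)) x)) = snd (T (- h)) x"
    by (rule AE_comp_measure_preserving[OF snd_pres])
  then show ?thesis
    using fst_snd[of "- h"] by eventually_elim simp
qed

context prob_space
begin

lemma measure_symdiff:
  assumes "X \<in> sets M" "Y \<in> sets M"
  shows "measure M (symdiff X Y) = measure M X + measure M Y - 2 * measure M (X \<inter> Y)"
proof -
  have "measure M (symdiff X Y) = measure M (X - Y) + measure M (Y - X)"
    unfolding symdiff_def using assms by (intro finite_measure_Union) auto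
  also have "\<dots> = measure M X - measure M (X \<inter> Y) + (measure M Y - measure M (Y \<inter> X))"
    using assms by (simp add: finite_measure_Diff')
  finally show ?thesis
    by (simp add: Int_commute)
qed

lemma measure_symdiff_triangle:
  assumes "X \<in> sets M" "Y \<in> sets M" "Z \<in> sets M"
  shows "measure M (symdiff X Z) \<le> measure M (symdiff X Y) + measure M (symdiff Y Z)"
proof -
  have "measure M (symdiff X Z) \<le> measure M (symdiff X Y \<union> symdiff Y Z)"
    using assms by (intro finite_measure_mono) (auto simp: symdiff_def)
  also have "\<dots> \<le> measure M (symdiff X Y) + measure M (symdiff Y Z)"
    using assms by (intro measure_Un_le) (auto simp: symdiff_def)
  finally show ?thesis .
qed

lemma abs_measure_Int_diff_le_symdiff:
  assumes "X \<in> sets M" "Y \<in> sets M" "C \<in> sets M"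
  shows "\<bar>measure M (X \<inter> C) - measure M (Y \<inter> C)\<bar> \<le> measure M (symdiff X Y)"
proof -
  have *: "measure M (X \<inter> C) \<le> measure M (Y \<inter> C) + measure M (symdiff X Y)"
    if "X \<in> sets M" "Y \<in> sets M" for X Y
  proof -
    have "measure M (X \<inter> C) \<le> measure M ((Y \<inter> C) \<union> symdiff X Y)"
      using that assms by (intro finite_measure_mono) (auto simp: symdiff_def)
    also have "\<dots> \<le> measure M (Y \<inter> C) + measure M (symdiff X Y)"
      using that assms by (intro measure_Un_le) (auto simp: symdiff_def)
    finally show ?thesis .
  qed
  show ?thesis
    using *[of X Y] *[of Y X] assms by (simp add: symdiff_commute abs_le_iff)
qed

lemma measure_mpt_preimg_Int:
  assumes T: "is_action M T" and "B \<in> sets M" "C \<in> sets M"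
  shows "measure M (mpt_preimg M (T h) B \<inter> C) = measure M (mpt_img M (T (- h)) B \<inter> C)"
proof (rule measure_eq_AE)
  have "is_mpt M (T g)" for g
    using T unfolding is_action_def by blast
  then show "mpt_preimg M (T h) B \<inter> C \<in> sets M" "mpt_img M (T (- h)) B \<inter> C \<in> sets M"
    using assms by (auto intro: mpt_preimg_sets mpt_img_sets)
  show "AE x in M. (x \<in> mpt_preimg M (T h) B \<inter> C) = (x \<in> mpt_img M (T (- h)) B \<inter> C)"
    using action_fst_AE_eq_snd_uminus[OF T, of h]
    by eventually_elim (auto simp: mpt_preimg_def mpt_img_def)
qed

lemma continuous_on_measure_symdiff_mpt_img:
  assumes T: "is_action M T" and B: "B \<in> sets M" and C: "C \<in> sets M"
  shows "continuous_on UNIV (\<lambda>h. measure M (symdiff (mpt_img M (T h) B) C))"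
proof -
  have mpt: "is_mpt M (T g)" for g
    using T unfolding is_action_def by blast
  have "measure M (symdiff (mpt_img M (T h) B) C)
      = measure M B + measure M C - 2 * measure M (mpt_img M (T h) B \<inter> C)" for h
    using measure_symdiff[OF mpt_img_sets[OF mpt B] C] measure_mpt_img[OF mpt B] by simp
  moreover have "continuous_on UNIV (\<lambda>h. measure M (mpt_img M (T h) B \<inter> C))"
    using T B C unfolding is_action_def by blast
  ultimately show ?thesis
    by (simp add: continuous_intros)
qed

lemma continuous_on_measure_symdiff_mpt_preimg:
  assumes T: "is_action M T" and B: "B \<in> sets M" and C: "C \<in> sets M"
  shows "continuous_on UNIV (\<lambda>h. measure M (symdiff (mpt_preimg M (T h) B) C))"
proof -
  have mpt: "is_mpt M (T g)" for g
    using T unfolding is_action_def by blast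
  have "measure M (symdiff (mpt_preimg M (T h) B) C)
      = measure M B + measure M C - 2 * measure M (mpt_img M (T (- h)) B \<inter> C)" for h
    using measure_symdiff[OF mpt_preimg_sets[OF mpt B] C] measure_mpt_preimg[OF mpt B]
      measure_mpt_preimg_Int[OF T B C] by simp
  moreover have "continuous_on UNIV (\<lambda>h. measure M (mpt_img M (T h) B \<inter> C))"
    using T B C unfolding is_action_def by blast
  then have "continuous_on UNIV (\<lambda>h. measure M (mpt_img M (T (- h)) B \<inter> C))"
    by (rule continuous_on_compose2) (auto intro: continuous_intros)
  ultimately show ?thesis
    by (simp add: continuous_intros)
qed

end

section \<open>Bounds for the metrics\<close>

lemma summable_half_power_mult:
  fixes f :: "nat \<Rightarrow> real"
  assumes "\<And>n. 0 \<le> f n" "\<And>n. f n \<le> c"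
  shows "summable (\<lambda>n. (1/2)^n * f n)"
proof (rule summable_comparison_test')
  show "summable (\<lambda>n. c * (1/2::real)^n)"
    by (intro summable_mult summable_geometric) simp
  show "norm ((1/2)^n * f n) \<le> c * (1/2)^n" for n
    using assms[of n] by (simp add: mult.commute)
qed

lemma suminf_half_power_mult_le:
  fixes f :: "nat \<Rightarrow> real"
  assumes f: "\<And>n. 0 \<le> f n" "\<And>n. f n \<le> c" and e: "\<And>n. n \<le> N \<Longrightarrow> f n \<le> e"
  shows "(\<Sum>n. (1/2)^n * f n) \<le> 2 * e + c * (1/2)^N"
proof -
  define k where "k = Suc N"
  have geom: "(\<Sum>n. (1/2::real)^n) = 2"
    using suminf_geometric[of "1/2::real"] by simp
  have sums: "summable (\<lambda>n. (1/2)^n * f n)"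
    by (rule summable_half_power_mult[OF f])
  have "(\<Sum>n. (1/2)^(n + k) * f (n + k)) \<le> (\<Sum>n. c * (1/2)^k * (1/2)^n)"
  proof (rule suminf_le)
    show "(1/2)^(n + k) * f (n + k) \<le> c * (1/2)^k * (1/2)^n" for n
      using f[of "n + k"] by (simp add: power_add mult_left_mono mult_ac)
    show "summable (\<lambda>n. (1/2)^(n + k) * f (n + k))"
      using summable_ignore_initial_segment[OF sums, of k] by (simp add: power_add)
    show "summable (\<lambda>n. c * (1/2)^k * (1/2::real)^n)"
      by (intro summable_mult summable_geometric) simp
  qed
  also have "\<dots> = c * (1/2)^N"
    using suminf_mult[OF summable_geometric, of "1/2::real" "c * (1/2)^k"] geom by (simp add: k_def)
  finally have tail: "(\<Sum>n. (1/2)^(n + k) * f (n + k)) \<le> c * (1/2)^N" .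
  have "(\<Sum>n<k. (1/2::real)^n * f n) \<le> (\<Sum>n<k. (1/2)^n * e)"
    using e by (intro sum_mono mult_left_mono) (auto simp: k_def)
  also have "\<dots> = e * (\<Sum>n<k. (1/2::real)^n)"
    by (simp add: sum_distrib_left mult.commute)
  also have "(\<Sum>n<k. (1/2::real)^n) = 2 * (1 - (1/2)^k)"
    by (simp add: sum_gp_strict)
  also have "e * (2 * (1 - (1/2)^k)) \<le> 2 * e"
    using f(1)[of 0] e[of 0] by (simp add: algebra_simps)
  finally have "(\<Sum>n<k. (1/2::real)^n * f n) \<le> 2 * e" .
  with tail show ?thesis
    using suminf_split_initial_segment[OF sums, of k] by (simp add: power_add)
qed

lemma suminf_half_power_mult_nonneg:
  fixes f :: "nat \<Rightarrow> real"
  assumes "\<And>n. 0 \<le> f n" "\<And>n. f n \<le> c"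
  shows "0 \<le> (\<Sum>n. (1/2)^n * f n)"
  using assms by (intro suminf_nonneg summable_half_power_mult) auto

context prob_space
begin

lemma prob_add_prob_le_2: "prob X + prob Y \<le> 2"
  using prob_le_1[of X] prob_le_1[of Y] by linarith

lemma abs_prob_diff_le_1: "\<bar>prob X - prob Y\<bar> \<le> 1"
  using prob_le_1[of X] prob_le_1[of Y] measure_nonneg[of M X] measure_nonneg[of M Y] by linarith

lemma dist_d_le:
  assumes "\<And>n. n \<le> N \<Longrightarrow> measure M (symdiff (mpt_img M P (A n)) (mpt_img M Q (A n))) +
      measure M (symdiff (mpt_preimg M P (A n)) (mpt_preimg M Q (A n))) \<le> e"
  shows "dist_d M A P Q \<le> 2 * e + 2 * (1/2)^N"
  unfolding dist_d_def using assms
  by (intro suminf_half_power_mult_le prob_add_prob_le_2 add_nonneg_nonneg measure_nonneg)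

lemma dist_d_nonneg: "0 \<le> dist_d M A P Q"
  unfolding dist_d_def
  by (intro suminf_half_power_mult_nonneg[where c = 2] prob_add_prob_le_2 add_nonneg_nonneg measure_nonneg)

lemma dist_d_le_6: "dist_d M A P Q \<le> 6"
proof -
  have "dist_d M A P Q \<le> 2 * 2 + 2 * (1/2)^0"
    by (intro dist_d_le prob_add_prob_le_2)
  then show ?thesis
    by simp
qed

lemma dist_a_le:
  assumes "\<And>n m. n \<le> N \<Longrightarrow> m \<le> N \<Longrightarrow>
     \<bar>measure M (mpt_img M P (A n) \<inter> A m) - measure M (mpt_img M Q (A n) \<inter> A m)\<bar> \<le> e"
  shows "dist_a M A P Q \<le> 4 * e + 5 * (1/2)^N"
proof -
  define x where "x n m = \<bar>measure M (mpt_img M P (A n) \<inter> A m) - measure M (mpt_img M Q (A n) \<inter> A m)\<bar>" for n m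
  have x: "0 \<le> x n m" "x n m \<le> 1" for n m
    unfolding x_def by (simp_all add: abs_prob_diff_le_1)
  define f where "f n = (\<Sum>m. (1/2)^m * x n m)" for n
  have "dist_a M A P Q = (\<Sum>n. (1/2)^n * f n)"
    unfolding dist_a_def f_def x_def[symmetric]
    using suminf_mult[OF summable_half_power_mult[OF x], of "(1/2)^_"]
    by (simp add: power_add mult_ac)
  also have "\<dots> \<le> 2 * (2 * e + (1/2)^N) + 3 * (1/2)^N"
  proof (rule suminf_half_power_mult_le)
    show "0 \<le> f n" for n
      unfolding f_def using x by (rule suminf_half_power_mult_nonneg)
    show "f n \<le> 3" for n
      unfolding f_def using suminf_half_power_mult_le[of "x n" 1 0 1] x by simp
    show "f n \<le> 2 * e + (1/2)^N" if "n \<le> N" for n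
      unfolding f_def using suminf_half_power_mult_le[of "x n" 1 N e] x assms[OF that]
      by (simp add: x_def)
  qed
  finally show ?thesis
    by simp
qed

end

lemma suminf_indicator_half_power_mult_le:
  fixes s :: "nat \<Rightarrow> real"
  assumes "\<And>i. i \<in> I \<Longrightarrow> 0 \<le> s i" "\<And>i. i \<in> I \<Longrightarrow> s i \<le> c"
    and "\<And>i. i \<in> I \<Longrightarrow> i \<le> N \<Longrightarrow> s i \<le> e" "0 \<le> e" "0 \<le> c"
  shows "(\<Sum>i. if i \<in> I then (1/2)^i * s i else 0) \<le> 2 * e + c * (1/2)^N"
proof -
  have "(\<Sum>i. if i \<in> I then (1/2)^i * s i else 0) = (\<Sum>i. (1/2)^i * (if i \<in> I then s i else 0))"
    by (intro suminf_cong) auto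
  also have "\<dots> \<le> 2 * e + c * (1/2)^N"
    by (rule suminf_half_power_mult_le) (use assms in auto)
  finally show ?thesis .
qed

section \<open>Approximation cells\<close>

definition approx_on :: "'a measure \<Rightarrow> (nat \<Rightarrow> 'a set) \<Rightarrow> ('g \<Rightarrow> 'a mpt) \<Rightarrow> real \<Rightarrow> 'g set
    \<Rightarrow> nat \<Rightarrow> nat \<Rightarrow> nat \<Rightarrow> bool" where
  "approx_on M A T \<delta> B n j j' \<longleftrightarrow> (\<forall>h\<in>B.
     measure M (symdiff (mpt_img M (T h) (A n)) (A j)) < \<delta> \<and>
     measure M (symdiff (mpt_preimg M (T h) (A n)) (A j')) < \<delta>)"

definition approx_domain :: "('g set \<times> nat \<times> nat \<times> nat) set \<Rightarrow> nat \<Rightarrow> 'g set" where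
  "approx_domain F N = {g. \<forall>n\<le>N. \<exists>B j j'. (B, n, j, j') \<in> F \<and> g \<in> B}"

definition approx_cell :: "'a measure \<Rightarrow> (nat \<Rightarrow> 'a set) \<Rightarrow> (nat \<Rightarrow> 'g::topological_group_add set)
    \<Rightarrow> nat set \<Rightarrow> 'g set \<Rightarrow> nat \<Rightarrow> ('g set \<times> nat \<times> nat \<times> nat) set \<Rightarrow> ('g \<Rightarrow> 'a mpt) set" where
  "approx_cell M A K I \<Gamma> N F = {T \<in> mixing_actions M \<Gamma>.
     (\<forall>B n j j'. (B, n, j, j') \<in> F \<longrightarrow> approx_on M A T ((1/2)^N) B n j j') \<and>
     (\<forall>g\<in>\<Gamma> - approx_domain F N. \<forall>n\<le>N. \<forall>m\<le>N.
         \<bar>measure M (mpt_img M (T g) (A n) \<inter> A m) - measure M (A n) * measure M (A m)\<bar> < (1/2)^N) \<and>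
     (\<forall>i\<in>I. i \<le> N \<longrightarrow> K i \<subseteq> approx_domain F N)}"

lemma approx_cellD:
  assumes "T \<in> approx_cell M A K I \<Gamma> N F"
  shows "T \<in> mixing_actions M \<Gamma>"
    and "(B, n, j, j') \<in> F \<Longrightarrow> approx_on M A T ((1/2)^N) B n j j'"
    and "g \<in> \<Gamma> \<Longrightarrow> g \<notin> approx_domain F N \<Longrightarrow> n \<le> N \<Longrightarrow> m \<le> N \<Longrightarrow>
      \<bar>measure M (mpt_img M (T g) (A n) \<inter> A m) - measure M (A n) * measure M (A m)\<bar> < (1/2)^N"
    and "i \<in> I \<Longrightarrow> i \<le> N \<Longrightarrow> K i \<subseteq> approx_domain F N"
  using assms unfolding approx_cell_def by blast+

lemma is_mpt_if_mixing_action: "T \<in> mixing_actions M \<Gamma> \<Longrightarrow> is_mpt M (T g)"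
  unfolding mixing_actions_def is_action_def by blast

context prob_space
begin

context
  fixes A :: "nat \<Rightarrow> 'a set"
  assumes A_sets: "range A \<subseteq> sets M"
begin

lemma approx_cell_close:
  assumes T: "T \<in> approx_cell M A K I \<Gamma> N F" and S: "S \<in> approx_cell M A K I \<Gamma> N F"
    and g: "g \<in> approx_domain F N" and "n \<le> N"
  shows "measure M (symdiff (mpt_img M (T g) (A n)) (mpt_img M (S g) (A n))) \<le> 2 * (1/2)^N"
    and "measure M (symdiff (mpt_preimg M (T g) (A n)) (mpt_preimg M (S g) (A n))) \<le> 2 * (1/2)^N"
proof -
  obtain B j j' where "(B, n, j, j') \<in> F" "g \<in> B"
    using g \<open>n \<le> N\<close> unfolding approx_domain_def by blast
  then have "approx_on M A T ((1/2)^N) B n j j'" "approx_on M A S ((1/2)^N) B n j j'"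
    using approx_cellD(2)[OF T] approx_cellD(2)[OF S] by blast+
  with \<open>g \<in> B\<close> have close:
    "measure M (symdiff (mpt_img M (T g) (A n)) (A j)) < (1/2)^N"
    "measure M (symdiff (mpt_img M (S g) (A n)) (A j)) < (1/2)^N"
    "measure M (symdiff (mpt_preimg M (T g) (A n)) (A j')) < (1/2)^N"
    "measure M (symdiff (mpt_preimg M (S g) (A n)) (A j')) < (1/2)^N"
    unfolding approx_on_def by blast+
  have mpt: "is_mpt M (T g)" "is_mpt M (S g)"
    using approx_cellD(1)[OF T] approx_cellD(1)[OF S] by (auto intro: is_mpt_if_mixing_action)
  have A: "A k \<in> sets M" for k
    using A_sets by blast
  show "measure M (symdiff (mpt_img M (T g) (A n)) (mpt_img M (S g) (A n))) \<le> 2 * (1/2)^N"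
    using measure_symdiff_triangle[OF mpt_img_sets[OF mpt(1) A[of n]] A[of j] mpt_img_sets[OF mpt(2) A[of n]]]
      close(1,2) by (simp add: symdiff_commute[of "A j"])
  show "measure M (symdiff (mpt_preimg M (T g) (A n)) (mpt_preimg M (S g) (A n))) \<le> 2 * (1/2)^N"
    using measure_symdiff_triangle[OF mpt_preimg_sets[OF mpt(1) A[of n]] A[of j'] mpt_preimg_sets[OF mpt(2) A[of n]]]
      close(3,4) by (simp add: symdiff_commute[of "A j'"])
qed

lemma approx_cell_dist_dG_le:
  assumes T: "T \<in> approx_cell M A K I \<Gamma> N F" and S: "S \<in> approx_cell M A K I \<Gamma> N F"
    and K: "\<forall>i\<in>I. K i \<noteq> {}"
  shows "dist_dG M A K I T S \<le> 26 * (1/2)^N"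
proof -
  have close: "dist_d M A (T g) (S g) \<le> 10 * (1/2)^N" if "g \<in> approx_domain F N" for g
  proof -
    have "dist_d M A (T g) (S g) \<le> 2 * (4 * (1/2)^N) + 2 * (1/2)^N"
      by (rule dist_d_le) (use approx_cell_close[OF T S that] in fastforce)
    then show ?thesis
      by simp
  qed
  define s where "s i = (SUP g\<in>K i. dist_d M A (T g) (S g))" for i
  have bdd: "bdd_above ((\<lambda>g. dist_d M A (T g) (S g)) ` K i)" for i
    using dist_d_le_6 by (intro bdd_aboveI2)
  have "dist_dG M A K I T S \<le> 2 * (10 * (1/2)^N) + 6 * (1/2)^N"
    unfolding dist_dG_def s_def[symmetric]
  proof (rule suminf_indicator_half_power_mult_le)
    show "0 \<le> s i" if "i \<in> I" for i
      using K that bdd dist_d_nonneg unfolding s_def by (meson all_not_in_conv cSUP_upper2)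
    show "s i \<le> 6" if "i \<in> I" for i
      using K that dist_d_le_6 unfolding s_def by (intro cSUP_least) auto
    show "s i \<le> 10 * (1/2)^N" if "i \<in> I" "i \<le> N" for i
      using K that close approx_cellD(4)[OF T] unfolding s_def by (intro cSUP_least) auto
  qed auto
  then show ?thesis
    by simp
qed

lemma approx_cell_dist_a_le:
  assumes T: "T \<in> approx_cell M A K I \<Gamma> N F" and S: "S \<in> approx_cell M A K I \<Gamma> N F"
    and "g \<in> \<Gamma>"
  shows "dist_a M A (T g) (S g) \<le> 13 * (1/2)^N"
proof -
  have mpt: "is_mpt M (T g)" "is_mpt M (S g)"
    using approx_cellD(1)[OF T] approx_cellD(1)[OF S] by (auto intro: is_mpt_if_mixing_action)
  have A: "A k \<in> sets M" for k
    using A_sets by blast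
  have "dist_a M A (T g) (S g) \<le> 4 * (2 * (1/2)^N) + 5 * (1/2)^N"
  proof (rule dist_a_le)
    fix n m assume "n \<le> N" "m \<le> N"
    show "\<bar>measure M (mpt_img M (T g) (A n) \<inter> A m) - measure M (mpt_img M (S g) (A n) \<inter> A m)\<bar>
      \<le> 2 * (1/2)^N"
    proof (cases "g \<in> approx_domain F N")
      case True
      then show ?thesis
        using abs_measure_Int_diff_le_symdiff[OF mpt_img_sets[OF mpt(1) A[of n]] mpt_img_sets[OF mpt(2) A[of n]] A[of m]]
          approx_cell_close(1)[OF T S True \<open>n \<le> N\<close>] by linarith
    next
      case False
      \<comment> \<open>off the approximation domain both actions are close to independence\<close>
      then show ?thesis
        using approx_cellD(3)[OF T \<open>g \<in> \<Gamma>\<close> False \<open>n \<le> N\<close> \<open>m \<le> N\<close>]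
          approx_cellD(3)[OF S \<open>g \<in> \<Gamma>\<close> False \<open>n \<le> N\<close> \<open>m \<le> N\<close>] by linarith
    qed
  qed
  then show ?thesis
    by simp
qed

lemma approx_cell_dist_m_le:
  assumes "T \<in> approx_cell M A K I \<Gamma> N F" "S \<in> approx_cell M A K I \<Gamma> N F"
    and "\<forall>i\<in>I. K i \<noteq> {}" "\<Gamma> \<noteq> {}"
  shows "dist_m M A K I \<Gamma> T S \<le> 39 * (1/2)^N"
proof -
  have "(SUP g\<in>\<Gamma>. dist_a M A (T g) (S g)) \<le> 13 * (1/2)^N"
    using approx_cell_dist_a_le[OF assms(1,2)] assms(4) by (intro cSUP_least) auto
  then show ?thesis
    using approx_cell_dist_dG_le[OF assms(1-3)] unfolding dist_m_def by simp
qed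

end

end

section \<open>Separability\<close>

lemma countable_dense_subset_if_countable_cells:
  fixes d :: "'b \<Rightarrow> 'b \<Rightarrow> real" and C :: "'i \<Rightarrow> 'b set"
  assumes "countable J" and "\<And>j. j \<in> J \<Longrightarrow> C j \<subseteq> X"
    and "\<And>x \<epsilon>. x \<in> X \<Longrightarrow> 0 < \<epsilon> \<Longrightarrow> \<exists>j\<in>J. x \<in> C j \<and> (\<forall>y\<in>C j. d x y < \<epsilon>)"
  shows "\<exists>D. countable D \<and> D \<subseteq> X \<and> (\<forall>x\<in>X. \<forall>\<epsilon>>0. \<exists>y\<in>D. d x y < \<epsilon>)"
proof -
  define D where "D = (\<lambda>j. SOME y. y \<in> C j) ` {j\<in>J. C j \<noteq> {}}"
  have rep: "(SOME y. y \<in> C j) \<in> C j" if "C j \<noteq> {}" for j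
    using that by (simp add: some_in_eq)
  have "countable D"
    unfolding D_def using assms(1) by simp
  moreover have "D \<subseteq> X"
    unfolding D_def using rep assms(2) by blast
  moreover have "\<exists>y\<in>D. d x y < \<epsilon>" if x: "x \<in> X" and "0 < \<epsilon>" for x \<epsilon>
  proof -
    obtain j where j: "j \<in> J" "x \<in> C j" "\<forall>y\<in>C j. d x y < \<epsilon>"
      using assms(3)[OF x \<open>0 < \<epsilon>\<close>] by blast
    then have "(SOME y. y \<in> C j) \<in> D"
      unfolding D_def by blast
    then show ?thesis
      using j rep by blast
  qed
  ultimately show ?thesis
    by blast
qed

context prob_space
begin

context
  fixes A :: "nat \<Rightarrow> 'a set"
  assumes A_sets: "range A \<subseteq> sets M"
    and A_dense: "\<forall>B\<in>sets M. \<forall>\<epsilon>>0. \<exists>i. measure M (symdiff (A i) B) < \<epsilon>"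
begin

lemma ex_basis_approx_on:
  assumes T: "is_action M T" and \<B>: "topological_basis \<B>" and "0 < \<delta>"
  shows "\<exists>B\<in>\<B>. \<exists>j j'. g \<in> B \<and> approx_on M A T \<delta> B n j j'"
proof -
  have mpt: "is_mpt M (T g)"
    using T unfolding is_action_def by blast
  have A: "A k \<in> sets M" for k
    using A_sets by blast
  obtain j where j: "measure M (symdiff (A j) (mpt_img M (T g) (A n))) < \<delta>"
    using A_dense mpt_img_sets[OF mpt A] \<open>0 < \<delta>\<close> by blast
  obtain j' where j': "measure M (symdiff (A j') (mpt_preimg M (T g) (A n))) < \<delta>"
    using A_dense mpt_preimg_sets[OF mpt A] \<open>0 < \<delta>\<close> by blast
  define V where "V = {h. measure M (symdiff (mpt_img M (T h) (A n)) (A j)) < \<delta>} \<inter>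
    {h. measure M (symdiff (mpt_preimg M (T h) (A n)) (A j')) < \<delta>}"
  have "open V"
    unfolding V_def
    by (intro open_Int open_Collect_less continuous_on_measure_symdiff_mpt_img[OF T A A]
        continuous_on_measure_symdiff_mpt_preimg[OF T A A] continuous_on_const)
  moreover have "g \<in> V"
    using j j' by (simp add: V_def symdiff_commute)
  ultimately obtain B where "B \<in> \<B>" "g \<in> B" "B \<subseteq> V"
    by (rule topological_basisE[OF \<B>])
  then show ?thesis
    unfolding approx_on_def V_def by blast
qed

lemma finite_approx_cover:
  assumes T: "is_action M T" and \<B>: "topological_basis \<B>" and "compact L" "0 < \<delta>"
  shows "\<exists>F. finite F \<and> F \<subseteq> \<B> \<times> {n} \<times> UNIV \<and> L \<subseteq> (\<Union>c\<in>F. fst c) \<and>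
    (\<forall>B m j j'. (B, m, j, j') \<in> F \<longrightarrow> approx_on M A T \<delta> B m j j')"
proof -
  define G where "G = {(B, n, j, j') | B j j'. B \<in> \<B> \<and> approx_on M A T \<delta> B n j j'}"
  have "open (fst c)" if "c \<in> G" for c
    using that topological_basis_open[OF \<B>] unfolding G_def by auto
  moreover have "L \<subseteq> (\<Union>c\<in>G. fst c)"
  proof
    fix g assume "g \<in> L"
    obtain B j j' where "B \<in> \<B>" "g \<in> B" "approx_on M A T \<delta> B n j j'"
      using ex_basis_approx_on[OF T \<B> \<open>0 < \<delta>\<close>] by blast
    then show "g \<in> (\<Union>c\<in>G. fst c)"
      unfolding G_def by force
  qed
  ultimately obtain F where "F \<subseteq> G" "finite F" "L \<subseteq> (\<Union>c\<in>F. fst c)"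
    by (rule compactE_image[OF \<open>compact L\<close>])
  then show ?thesis
    unfolding G_def by blast
qed

lemma mixing_action_in_approx_cell:
  assumes T: "T \<in> mixing_actions M \<Gamma>" and \<B>: "topological_basis \<B>"
    and K: "\<forall>i\<in>I. compact (K i)"
  shows "\<exists>F. finite F \<and> F \<subseteq> \<B> \<times> UNIV \<and> T \<in> approx_cell M A K I \<Gamma> N F"
proof -
  define \<delta> :: real where "\<delta> = (1/2)^N"
  have "0 < \<delta>"
    by (simp add: \<delta>_def)
  have act: "is_action M T" and mix: "is_mixing M \<Gamma> T"
    using T unfolding mixing_actions_def by auto
  have A: "A k \<in> sets M" for k
    using A_sets by blast
  have "\<forall>n m. \<exists>C. compact C \<and> (\<forall>g\<in>\<Gamma> - C.
    \<bar>measure M (mpt_img M (T g) (A n) \<inter> A m) - measure M (A n) * measure M (A m)\<bar> < \<delta>)"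
    by (intro allI mix[unfolded is_mixing_def, rule_format, OF A A \<open>0 < \<delta>\<close>])
  then obtain C where C: "\<And>n m. compact (C n m)" and C_mix: "\<And>n m. \<forall>g\<in>\<Gamma> - C n m.
    \<bar>measure M (mpt_img M (T g) (A n) \<inter> A m) - measure M (A n) * measure M (A m)\<bar> < \<delta>"
    by metis
  define L where "L = (\<Union>n\<le>N. \<Union>m\<le>N. C n m) \<union> (\<Union>i\<in>I \<inter> {..N}. K i)"
  have "compact L"
    unfolding L_def using C K by (intro compact_Un compact_UN) auto
  then have "\<forall>n. \<exists>F. finite F \<and> F \<subseteq> \<B> \<times> {n} \<times> UNIV \<and> L \<subseteq> (\<Union>c\<in>F. fst c) \<and>
      (\<forall>B m j j'. (B, m, j, j') \<in> F \<longrightarrow> approx_on M A T \<delta> B m j j')"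
    using finite_approx_cover[OF act \<B> _ \<open>0 < \<delta>\<close>] by blast
  then obtain Fs where Fs: "\<And>n. finite (Fs n)" "\<And>n. Fs n \<subseteq> \<B> \<times> {n} \<times> UNIV"
    "\<And>n. L \<subseteq> (\<Union>c\<in>Fs n. fst c)"
    "\<And>n B m j j'. (B, m, j, j') \<in> Fs n \<Longrightarrow> approx_on M A T \<delta> B m j j'"
    by metis
  define F where "F = (\<Union>n\<le>N. Fs n)"
  have dom: "L \<subseteq> approx_domain F N"
  proof
    fix g assume "g \<in> L"
    have "\<exists>B j j'. (B, n, j, j') \<in> F \<and> g \<in> B" if "n \<le> N" for n
    proof -
      obtain c where "c \<in> Fs n" "g \<in> fst c"
        using Fs(3) \<open>g \<in> L\<close> by blast
      moreover obtain B k j j' where c: "c = (B, k, j, j')"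
        using prod_cases4 by blast
      moreover from calculation have "k = n"
        using Fs(2) by auto
      ultimately show ?thesis
        unfolding F_def using that by auto
    qed
    then show "g \<in> approx_domain F N"
      unfolding approx_domain_def by blast
  qed
  have "T \<in> approx_cell M A K I \<Gamma> N F"
    unfolding approx_cell_def
  proof (intro CollectI conjI allI impI ballI)
    show "T \<in> mixing_actions M \<Gamma>"
      by (fact T)
    show "approx_on M A T ((1/2)^N) B n j j'" if "(B, n, j, j') \<in> F" for B n j j'
      using that Fs(4) unfolding F_def \<delta>_def by blast
    show "\<bar>measure M (mpt_img M (T g) (A n) \<inter> A m) - measure M (A n) * measure M (A m)\<bar> < (1/2)^N"
      if "g \<in> \<Gamma> - approx_domain F N" "n \<le> N" "m \<le> N" for g n m
    proof -
      have "g \<notin> C n m"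
        using that dom unfolding L_def by blast
      then show ?thesis
        using C_mix that unfolding \<delta>_def by blast
    qed
    show "K i \<subseteq> approx_domain F N" if "i \<in> I" "i \<le> N" for i
      using that dom unfolding L_def by blast
  qed
  moreover have "finite F" "F \<subseteq> \<B> \<times> UNIV"
    unfolding F_def using Fs(1,2) by auto
  ultimately show ?thesis
    by blast
qed

end

end

theorem mainTheorem5:
  fixes M :: "'a measure" and A :: "nat \<Rightarrow> 'a set"
    and K :: "nat \<Rightarrow> 'g::{topological_group_add, t2_space, first_countable_topology} set"
    and I :: "nat set" and \<Gamma> :: "'g set"
  assumes "prob_space M" and "nonatomic M" and "lebesgue_space M"
    and "range A \<subseteq> sets M" and "sets M = sigma_sets (space M) (range A)"
    and "\<forall>B\<in>sets M. \<forall>\<epsilon>>0. \<exists>i. measure M (symdiff (A i) B) < \<epsilon>"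
    and "locally_compact_space (euclidean :: 'g topology)"
    and "\<forall>i\<in>I. compact (K i) \<and> interior (K i) \<noteq> {}"
    and "\<exists>S. S \<subseteq> (\<Union>i\<in>I. K i) \<and> generates_group S"
    and "\<not> (\<exists>C. compact C \<and> \<Gamma> \<subseteq> C)"
  shows "\<exists>D. countable D \<and> D \<subseteq> mixing_actions M \<Gamma> \<and>
    (\<forall>T\<in>mixing_actions M \<Gamma>. \<forall>\<epsilon>>0. \<exists>S\<in>D. dist_m M A K I \<Gamma> T S < \<epsilon>)"
proof -
  interpret prob_space M by fact
  have K_compact: "\<forall>i\<in>I. compact (K i)" and K_nonempty: "\<forall>i\<in>I. K i \<noteq> {}"
    using assms(8) interior_subset by blast+
  have "\<Gamma> \<noteq> {}"
    using assms(10) compact_empty by blast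
  obtain W :: "nat \<Rightarrow> 'g set" where "\<And>k. compact (W k)" "(\<Union>k. W k) = UNIV"
    using sigma_compact_if_generated_by_compacts[OF K_compact assms(9)] by blast
  then obtain \<B> :: "'g set set" where \<B>: "countable \<B>" "topological_basis \<B>"
    using countable_basis_if_sigma_compact by blast
  show ?thesis
  proof (rule countable_dense_subset_if_countable_cells
      [where J = "UNIV \<times> {F. finite F \<and> F \<subseteq> \<B> \<times> UNIV}" and C = "\<lambda>(N, F). approx_cell M A K I \<Gamma> N F"])
    show "countable ((UNIV :: nat set) \<times> {F. finite F \<and> F \<subseteq> \<B> \<times> (UNIV :: (nat \<times> nat \<times> nat) set)})"
      by (intro countable_SIGMA countable_Collect_finite_subset \<B>(1)) auto
    show "(\<lambda>(N, F). approx_cell M A K I \<Gamma> N F) j \<subseteq> mixing_actions M \<Gamma>" for j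
      by (auto simp: approx_cell_def)
    fix T and \<epsilon> :: real assume T: "T \<in> mixing_actions M \<Gamma>" and "0 < \<epsilon>"
    obtain N where N: "39 * (1/2::real)^N < \<epsilon>"
      using real_arch_pow_inv[of "\<epsilon> / 39" "1/2"] \<open>0 < \<epsilon>\<close> by (auto simp: field_simps)
    obtain F where "finite F" "F \<subseteq> \<B> \<times> UNIV" "T \<in> approx_cell M A K I \<Gamma> N F"
      using mixing_action_in_approx_cell[OF assms(4,6) T \<B>(2) K_compact] by blast
    moreover have "dist_m M A K I \<Gamma> T S < \<epsilon>" if "S \<in> approx_cell M A K I \<Gamma> N F" for S
      using approx_cell_dist_m_le[OF assms(4) \<open>T \<in> approx_cell M A K I \<Gamma> N F\<close> that K_nonempty \<open>\<Gamma> \<noteq> {}\<close>] N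
      by linarith
    ultimately show "\<exists>j\<in>UNIV \<times> {F. finite F \<and> F \<subseteq> \<B> \<times> UNIV}. T \<in> (\<lambda>(N, F). approx_cell M A K I \<Gamma> N F) j \<and>
        (\<forall>S\<in>(\<lambda>(N, F). approx_cell M A K I \<Gamma> N F) j. dist_m M A K I \<Gamma> T S < \<epsilon>)"
      by auto
  qed
qed

end
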